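(* Let $R$ be a ring with $|R|\geq 2$, regarded also as a semiring. The following are equivalent: (1) $R$ is ideal-simple as a ring (its only ring ideals are $\{0\}$ and $R$); (2) $R$ is ideal-free as a semiring; (3) $R$ is $k$-simple as a semiring; (4) $R$ is congruence-simple as a ring; (5) $R$ is congruence-simple as a semiring; (6) $R$ is $k$-congruence-simple as a semiring.
   Context: A semiring $(R,+,\cdot)$ is a set with two binary operations such that $(R,+)$ is a commutative semigroup, $(R,\cdot)$ is a semigroup, and multiplication distributes over addition from both sides. A zero of $R$ is an element $0$ with $0+r=r$ and $0r=r0=0$ for all $r$. A (semiring) ideal of $R$ is a nonempty subset $A\subseteq R$ with $a+b\in A$ and $ra,ar\in A$ for all $a,b\in A$, $r\in R$; the trivial ideals are $R$ and $\{0\}$ (when a zero exists). $R$ is ideal-free if it has no nontrivial semiring ideals. For an ideal $A$, its $k$-closure is $\overline{A}=\{x\in R\mid x+a=b \text{ for some } a,b\in A\}$, and $A$ is a $k$-ideal if $A=\overline{A}$; $R$ is $k$-simple if it has no nontrivial $k$-ideals. A congruence on $R$ (as semiring) is an equivalence relation $\equiv$ with $a\equiv b$ implying $a+c\equiv b+c$, $ac\equiv bc$, $ca\equiv cb$; $R$ is congruence-simple (as a semiring, resp. as a ring with ring congruences) if it has exactly two congruences, namely $\mathrm{id}_R$ and $R\times R$. For an ideal $A$, $\kappa_A$ is the congruence defined by $x\,\kappa_A\,y$ iff $x+a=y+b$ for some $a,b\in A$; a congruence is a $k$-congruence if it equals $\kappa_A$ for some ideal $A$; $R$ is $k$-congruence-simple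 if it has no $k$-congruences other than $R\times R$ and $\mathrm{id}_R$. *)

theory Defs
  imports Main
begin

text \<open>The ring R is the whole type 'a of class ring (associative, not necessarily
unital). Viewed as a semiring, its zero is 0.\<close>

definition ring_ideal :: "'a::ring set \<Rightarrow> bool" where
  "ring_ideal A \<longleftrightarrow> A \<noteq> {} \<and> (\<forall>a\<in>A. \<forall>b\<in>A. a + b \<in> A) \<and> (\<forall>a\<in>A. - a \<in> A)
     \<and> (\<forall>a\<in>A. \<forall>r. r * a \<in> A \<and> a * r \<in> A)"

definition semiring_ideal :: "'a::semiring set \<Rightarrow> bool" where
  "semiring_ideal A \<longleftrightarrow> A \<noteq> {} \<and> (\<forall>a\<in>A. \<forall>b\<in>A. a + b \<in> A)
     \<and> (\<forall>a\<in>A. \<forall>r. r * a \<in> A \<and> a * r \<in> A)"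

definition k_closure :: "'a::semiring set \<Rightarrow> 'a set" where
  "k_closure A = {x. \<exists>a\<in>A. \<exists>b\<in>A. x + a = b}"

definition k_ideal :: "'a::semiring set \<Rightarrow> bool" where
  "k_ideal A \<longleftrightarrow> semiring_ideal A \<and> A = k_closure A"

definition semiring_congruence :: "('a::semiring \<times> 'a) set \<Rightarrow> bool" where
  "semiring_congruence r \<longleftrightarrow> equiv UNIV r \<and>
     (\<forall>a b c. (a, b) \<in> r \<longrightarrow> (a + c, b + c) \<in> r \<and> (a * c, b * c) \<in> r \<and> (c * a, c * b) \<in> r)"

definition ring_congruence :: "('a::ring \<times> 'a) set \<Rightarrow> bool" where
  "ring_congruence r \<longleftrightarrow> equiv UNIV r \<and>
     (\<forall>a b c. (a, b) \<in> r \<longrightarrow> (a + c, b + c) \<in> r \<and> (- a, - b) \<in> r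
        \<and> (a * c, b * c) \<in> r \<and> (c * a, c * b) \<in> r)"

definition kappa :: "'a::semiring set \<Rightarrow> ('a \<times> 'a) set" where
  "kappa A = {(x, y). \<exists>a\<in>A. \<exists>b\<in>A. x + a = y + b}"

definition ring_ideal_simple :: "'a::ring itself \<Rightarrow> bool" where
  "ring_ideal_simple _ \<longleftrightarrow> (\<forall>A::'a set. ring_ideal A \<longrightarrow> A = {0} \<or> A = UNIV)"

definition ideal_free :: "'a::semiring_0 itself \<Rightarrow> bool" where
  "ideal_free _ \<longleftrightarrow> (\<forall>A::'a set. semiring_ideal A \<longrightarrow> A = {0} \<or> A = UNIV)"

definition k_simple :: "'a::semiring_0 itself \<Rightarrow> bool" where
  "k_simple _ \<longleftrightarrow> (\<forall>A::'a set. k_ideal A \<longrightarrow> A = {0} \<or> A = UNIV)"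

definition ring_congruence_simple :: "'a::ring itself \<Rightarrow> bool" where
  "ring_congruence_simple _ \<longleftrightarrow> {r::('a \<times> 'a) set. ring_congruence r} = {Id, UNIV}"

definition semiring_congruence_simple :: "'a::semiring itself \<Rightarrow> bool" where
  "semiring_congruence_simple _ \<longleftrightarrow> {r::('a \<times> 'a) set. semiring_congruence r} = {Id, UNIV}"

definition k_congruence_simple :: "'a::semiring itself \<Rightarrow> bool" where
  "k_congruence_simple _ \<longleftrightarrow>
     (\<forall>A::'a set. semiring_ideal A \<longrightarrow> kappa A = Id \<or> kappa A = UNIV)"

end

theory Submission
  imports Defs
begin

text \<open>For a ring, ring ideals and semiring $k$-ideals coincide, ring congruences and semiring
congruences coincide, and both kinds of congruence correspond bijectively to ring ideals via
$I \mapsto \{(x,y).\ x - y \in I\}$; moreover $\kappa_A$ is the congruence of the ring ideal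
$A - A$. The only real work is that a simple ring is ideal-free as a semiring. Given a semiring
ideal $A$, its symmetric part $\{x \in A.\ -x \in A\}$ is a ring ideal. If it is $\{0\}$ but
$a \in A$ is nonzero, then all products with elements of $A$ vanish, so the annihilator of $R$
contains $a$ and multiplication on $R$ is zero. Then every additive subgroup is an ideal, and
applying simplicity to the subgroup generated by $2a$ shows that $a$ has finite additive order,
whence $-a$ is a positive multiple of $a$ and lies in $A$, a contradiction.\<close>

lemma semiring_ideal_zero:
  fixes A :: "'a::semiring_0 set"
  assumes "semiring_ideal A"
  shows "0 \<in> A"
  using assms unfolding semiring_ideal_def by (metis ex_in_conv mult_zero_left)

lemma ring_ideal_iff_semiring_ideal_uminus_closed:
  "ring_ideal (A::'a::ring set) \<longleftrightarrow> semiring_ideal A \<and> (\<forall>a\<in>A. - a \<in> A)"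
  unfolding ring_ideal_def semiring_ideal_def by blast

lemma ring_ideal_zero: "ring_ideal (A::'a::ring set) \<Longrightarrow> 0 \<in> A"
  by (simp add: ring_ideal_iff_semiring_ideal_uminus_closed semiring_ideal_zero)

lemma ring_ideal_diff:
  "ring_ideal (A::'a::ring set) \<Longrightarrow> a \<in> A \<Longrightarrow> b \<in> A \<Longrightarrow> a - b \<in> A"
  unfolding ring_ideal_def by (metis diff_conv_add_uminus)

lemma k_ideal_iff_ring_ideal: "k_ideal (A::'a::ring set) \<longleftrightarrow> ring_ideal A"
proof
  assume "k_ideal A"
  then have ideal: "semiring_ideal A" and closed: "k_closure A = A"
    by (auto simp: k_ideal_def)
  have "- a \<in> k_closure A" if "a \<in> A" for a
    using that semiring_ideal_zero[OF ideal] unfolding k_closure_def by force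
  then show "ring_ideal A"
    using ideal closed by (simp add: ring_ideal_iff_semiring_ideal_uminus_closed)
next
  assume ideal: "ring_ideal A"
  have "k_closure A \<subseteq> A"
  proof
    fix x assume "x \<in> k_closure A"
    then obtain a b where "a \<in> A" "b \<in> A" "x = b - a"
      unfolding k_closure_def by (auto simp: eq_diff_eq)
    then show "x \<in> A" using ring_ideal_diff[OF ideal] by simp
  qed
  moreover have "A \<subseteq> k_closure A"
    using ring_ideal_zero[OF ideal] unfolding k_closure_def by force
  ultimately show "k_ideal A"
    using ideal by (auto simp: k_ideal_def ring_ideal_iff_semiring_ideal_uminus_closed)
qed

lemma semiring_congruence_iff_ring_congruence:
  "semiring_congruence (r::('a::ring \<times> 'a) set) \<longleftrightarrow> ring_congruence r"
proof
  assume cong: "semiring_congruence r"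
  have "(- a, - b) \<in> r" if "(a, b) \<in> r" for a b
  proof -
    have "(a + (- a - b), b + (- a - b)) \<in> r"
      using cong that unfolding semiring_congruence_def by blast
    then have "(- b, - a) \<in> r" by (simp add: algebra_simps)
    then show ?thesis using cong unfolding semiring_congruence_def equiv_def by (meson symD)
  qed
  then show "ring_congruence r"
    using cong unfolding semiring_congruence_def ring_congruence_def by blast
qed (auto simp: semiring_congruence_def ring_congruence_def)

definition ideal_congruence :: "'a::ring set \<Rightarrow> ('a \<times> 'a) set" where
  "ideal_congruence I = {(x, y). x - y \<in> I}"

lemma ring_congruence_ideal_congruence:
  assumes "ring_ideal I"
  shows "ring_congruence (ideal_congruence I)"
proof -
  have uminus: "\<And>a. a \<in> I \<Longrightarrow> - a \<in> I"
    and add: "\<And>a b. a \<in> I \<Longrightarrow> b \<in> I \<Longrightarrow> a + b \<in> I"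
    and mult: "\<And>a c. a \<in> I \<Longrightarrow> c * a \<in> I \<and> a * c \<in> I"
    using assms unfolding ring_ideal_def by auto
  have "equiv UNIV (ideal_congruence I)"
  proof (rule equivI)
    show "refl (ideal_congruence I)"
      by (rule reflI) (simp add: ideal_congruence_def ring_ideal_zero[OF assms])
    show "sym (ideal_congruence I)"
      by (rule symI) (metis ideal_congruence_def case_prod_conv mem_Collect_eq uminus minus_diff_eq)
    show "trans (ideal_congruence I)"
      by (rule transI) (auto simp: ideal_congruence_def dest: add)
  qed simp
  moreover have "(a + c, b + c) \<in> ideal_congruence I \<and> (- a, - b) \<in> ideal_congruence I
      \<and> (a * c, b * c) \<in> ideal_congruence I \<and> (c * a, c * b) \<in> ideal_congruence I"
    if "(a, b) \<in> ideal_congruence I" for a b c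
    using that uminus[of "a - b"] mult[of "a - b" c]
    by (auto simp: ideal_congruence_def algebra_simps)
  ultimately show ?thesis unfolding ring_congruence_def by blast
qed

lemma ideal_congruence_eq_Id_iff:
  "ring_ideal I \<Longrightarrow> ideal_congruence I = Id \<longleftrightarrow> I = {0}"
  unfolding ideal_congruence_def using ring_ideal_zero[of I]
  by (auto, metis (mono_tags) IdD case_prodI diff_0_right mem_Collect_eq)

lemma ideal_congruence_eq_UNIV_iff: "ideal_congruence I = UNIV \<longleftrightarrow> I = UNIV"
  unfolding ideal_congruence_def
  by (auto, metis (mono_tags) UNIV_I case_prodD diff_0_right mem_Collect_eq)

lemma ring_ideal_congruence_class_zero:
  assumes "ring_congruence (r::('a::ring \<times> 'a) set)"
  shows "ring_ideal {x. (x, 0) \<in> r}"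
proof -
  have compat: "\<And>a b c. (a, b) \<in> r \<Longrightarrow> (a + c, b + c) \<in> r \<and> (- a, - b) \<in> r
      \<and> (a * c, b * c) \<in> r \<and> (c * a, c * b) \<in> r"
    and equiv: "equiv UNIV r"
    using assms unfolding ring_congruence_def by blast+
  show ?thesis unfolding ring_ideal_def
  proof (intro conjI ballI allI)
    show "{x. (x, 0) \<in> r} \<noteq> {}"
      using equiv unfolding equiv_def refl_on_def by blast
  next
    fix a b assume "a \<in> {x. (x, 0) \<in> r}" "b \<in> {x. (x, 0) \<in> r}"
    then have "(a + b, 0 + b) \<in> r" "(b, 0) \<in> r" using compat[of a 0 b] by auto
    then show "a + b \<in> {x. (x, 0) \<in> r}"
      using equiv unfolding equiv_def by (auto elim: transE)
  qed (use compat[of _ 0] in auto)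
qed

lemma ring_congruence_eq_ideal_congruence:
  assumes "ring_congruence (r::('a::ring \<times> 'a) set)"
  shows "r = ideal_congruence {x. (x, 0) \<in> r}"
proof -
  have compat: "\<And>a b c. (a, b) \<in> r \<Longrightarrow> (a + c, b + c) \<in> r"
    using assms unfolding ring_congruence_def by blast
  have "(a, b) \<in> r \<longleftrightarrow> (a - b, 0) \<in> r" for a b
    using compat[of a b "- b"] compat[of "a - b" 0 b] by auto
  then show ?thesis unfolding ideal_congruence_def by auto
qed

lemma ring_congruence_Id: "ring_congruence (Id::('a::ring \<times> 'a) set)"
  unfolding ring_congruence_def by (auto simp: equiv_def refl_on_def sym_def trans_def)

lemma ring_congruence_UNIV: "ring_congruence (UNIV::('a::ring \<times> 'a) set)"
  unfolding ring_congruence_def by (auto simp: equiv_def refl_on_def sym_def trans_def)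

lemma ring_congruence_simple_iff_ring_ideal_simple:
  "ring_congruence_simple TYPE('a::ring) \<longleftrightarrow> ring_ideal_simple TYPE('a)"
proof
  assume simple: "ring_congruence_simple TYPE('a)"
  show "ring_ideal_simple TYPE('a)" unfolding ring_ideal_simple_def
  proof (intro allI impI)
    fix I :: "'a set" assume I: "ring_ideal I"
    then have "ideal_congruence I = Id \<or> ideal_congruence I = UNIV"
      using simple ring_congruence_ideal_congruence unfolding ring_congruence_simple_def by blast
    then show "I = {0} \<or> I = UNIV"
      by (simp add: ideal_congruence_eq_Id_iff[OF I] ideal_congruence_eq_UNIV_iff)
  qed
next
  assume simple: "ring_ideal_simple TYPE('a)"
  have "r = Id \<or> r = UNIV" if r: "ring_congruence r" for r :: "('a \<times> 'a) set"
  proof -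
    note I = ring_ideal_congruence_class_zero[OF r]
    then have "{x. (x, 0) \<in> r} = {0} \<or> {x. (x, 0) \<in> r} = UNIV"
      using simple unfolding ring_ideal_simple_def by blast
    then show ?thesis
      using ring_congruence_eq_ideal_congruence[OF r]
      by (metis ideal_congruence_eq_Id_iff[OF I] ideal_congruence_eq_UNIV_iff)
  qed
  then show "ring_congruence_simple TYPE('a)"
    unfolding ring_congruence_simple_def using ring_congruence_Id ring_congruence_UNIV by blast
qed

definition differences :: "'a::ring set \<Rightarrow> 'a set" where
  "differences A = {a - b | a b. a \<in> A \<and> b \<in> A}"

lemma ring_ideal_differences:
  assumes "semiring_ideal A"
  shows "ring_ideal (differences A)"
proof -
  have add: "\<And>a b. a \<in> A \<Longrightarrow> b \<in> A \<Longrightarrow> a + b \<in> A"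
    and mult: "\<And>a r. a \<in> A \<Longrightarrow> r * a \<in> A \<and> a * r \<in> A" and "A \<noteq> {}"
    using assms unfolding semiring_ideal_def by auto
  show ?thesis unfolding ring_ideal_def
  proof (intro conjI ballI allI)
    show "differences A \<noteq> {}" using \<open>A \<noteq> {}\<close> unfolding differences_def by blast
  next
    fix x y assume "x \<in> differences A" "y \<in> differences A"
    then obtain a b c d where "a \<in> A" "b \<in> A" "c \<in> A" "d \<in> A" "x = a - b" "y = c - d"
      unfolding differences_def by blast
    moreover have "(a - b) + (c - d) = (a + c) - (b + d)" by (simp add: algebra_simps)
    ultimately show "x + y \<in> differences A" unfolding differences_def using add by blast
  next
    fix x assume "x \<in> differences A"
    then obtain a b where "a \<in> A" "b \<in> A" "x = a - b" unfolding differences_def by blast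
    then show "- x \<in> differences A" unfolding differences_def by force
  next
    fix x r assume "x \<in> differences A"
    then obtain a b where "a \<in> A" "b \<in> A" "x = a - b" unfolding differences_def by blast
    moreover have "r * (a - b) = r * a - r * b" "(a - b) * r = a * r - b * r"
      by (simp_all add: algebra_simps)
    ultimately show "r * x \<in> differences A" "x * r \<in> differences A"
      unfolding differences_def using mult by blast+
  qed
qed

lemma differences_ring_ideal:
  assumes "ring_ideal A"
  shows "differences A = A"
proof
  show "differences A \<subseteq> A"
    unfolding differences_def using ring_ideal_diff[OF assms] by blast
  have "a = a - 0" for a :: 'a by simp
  then show "A \<subseteq> differences A"
    unfolding differences_def using ring_ideal_zero[OF assms] by blast
qed

lemma kappa_eq_ideal_congruence_differences: "kappa A = ideal_congruence (differences A)"
proof -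
  have "x + a = y + b \<longleftrightarrow> x - y = b - a" for x y a b :: 'a
    by (simp add: algebra_simps)
  then show ?thesis
    unfolding kappa_def ideal_congruence_def differences_def by auto
qed

lemma k_congruence_simple_iff_ring_ideal_simple:
  "k_congruence_simple TYPE('a::ring) \<longleftrightarrow> ring_ideal_simple TYPE('a)"
proof
  assume simple: "k_congruence_simple TYPE('a)"
  show "ring_ideal_simple TYPE('a)" unfolding ring_ideal_simple_def
  proof (intro allI impI)
    fix I :: "'a set" assume I: "ring_ideal I"
    then have "kappa I = ideal_congruence I"
      by (simp add: kappa_eq_ideal_congruence_differences differences_ring_ideal)
    then have "ideal_congruence I = Id \<or> ideal_congruence I = UNIV"
      using simple I unfolding k_congruence_simple_def ring_ideal_iff_semiring_ideal_uminus_closed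
      by auto
    then show "I = {0} \<or> I = UNIV"
      by (simp add: ideal_congruence_eq_Id_iff[OF I] ideal_congruence_eq_UNIV_iff)
  qed
next
  assume simple: "ring_ideal_simple TYPE('a)"
  show "k_congruence_simple TYPE('a)" unfolding k_congruence_simple_def
  proof (intro allI impI)
    fix A :: "'a set" assume "semiring_ideal A"
    then have I: "ring_ideal (differences A)" by (rule ring_ideal_differences)
    then have "differences A = {0} \<or> differences A = UNIV"
      using simple unfolding ring_ideal_simple_def by blast
    then show "kappa A = Id \<or> kappa A = UNIV"
      by (simp add: kappa_eq_ideal_congruence_differences
          ideal_congruence_eq_Id_iff[OF I] ideal_congruence_eq_UNIV_iff)
  qed
qed

lemma sum_list_replicate_in_semiring_ideal:
  fixes A :: "'a::semiring_0 set"
  assumes "semiring_ideal A" "a \<in> A"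
  shows "sum_list (replicate n a) \<in> A"
  using assms by (induction n) (auto simp: semiring_ideal_def semiring_ideal_zero)

lemma sum_list_replicate_add:
  fixes a :: "'a::monoid_add"
  shows "sum_list (replicate (m + n) a) = sum_list (replicate m a) + sum_list (replicate n a)"
  by (simp add: replicate_add)

lemma sum_list_replicate_eq_imp_torsion:
  fixes a :: "'a::ab_group_add"
  assumes "sum_list (replicate m a) = sum_list (replicate n a)" "m \<noteq> n"
  shows "\<exists>k. sum_list (replicate (Suc k) a) = 0"
proof -
  have *: "\<exists>k. sum_list (replicate (Suc k) a) = 0"
    if "sum_list (replicate p a) = sum_list (replicate q a)" "q < p" for p q
  proof -
    obtain k where "p = Suc k + q" using \<open>q < p\<close> less_iff_Suc_add by auto
    then have "sum_list (replicate (Suc k) a) + sum_list (replicate q a) = sum_list (replicate q a)"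
      using that(1) by (simp only: sum_list_replicate_add)
    then show ?thesis by auto
  qed
  show ?thesis using assms *[of m n] *[of n m] by (metis nat_neq_iff)
qed

lemma ring_ideal_symmetric_part:
  fixes A :: "'a::ring set"
  assumes "semiring_ideal A"
  shows "ring_ideal {x \<in> A. - x \<in> A}"
proof -
  have add: "\<And>a b. a \<in> A \<Longrightarrow> b \<in> A \<Longrightarrow> a + b \<in> A"
    and mult: "\<And>a r. a \<in> A \<Longrightarrow> r * a \<in> A \<and> a * r \<in> A"
    using assms unfolding semiring_ideal_def by auto
  show ?thesis unfolding ring_ideal_def
  proof (intro conjI ballI allI)
    show "{x \<in> A. - x \<in> A} \<noteq> {}" using semiring_ideal_zero[OF assms] by auto
  next
    fix a b assume "a \<in> {x \<in> A. - x \<in> A}" "b \<in> {x \<in> A. - x \<in> A}"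
    then show "a + b \<in> {x \<in> A. - x \<in> A}"
      using add[of a b] add[of "- a" "- b"] by simp
  next
    fix a r assume "a \<in> {x \<in> A. - x \<in> A}"
    then show "r * a \<in> {x \<in> A. - x \<in> A}" "a * r \<in> {x \<in> A. - x \<in> A}"
      using mult[of a r] mult[of a "- r"] by simp_all
  qed simp
qed

lemma ring_ideal_annihilator: "ring_ideal {x::'a::ring. \<forall>r. r * x = 0 \<and> x * r = 0}"
  unfolding ring_ideal_def
proof (intro conjI ballI allI)
  fix a r :: 'a assume "a \<in> {x. \<forall>r. r * x = 0 \<and> x * r = 0}"
  then show "r * a \<in> {x. \<forall>r. r * x = 0 \<and> x * r = 0}" "a * r \<in> {x. \<forall>r. r * x = 0 \<and> x * r = 0}"
    by (simp_all add: mult.assoc[symmetric])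
next
  show "{x::'a. \<forall>r. r * x = 0 \<and> x * r = 0} \<noteq> {}" by (auto intro: exI[of _ 0])
qed (auto simp: distrib_left distrib_right)

text \<open>In a ring with zero multiplication the ideals are the additive subgroups; so the subgroup
generated by $2a$ is $0$ or everything, and in both cases some positive multiple of $a$ vanishes.\<close>

lemma zero_mult_simple_ring_torsion:
  fixes a :: "'a::ring"
  assumes simple: "ring_ideal_simple TYPE('a)" and zero_mult: "\<forall>x y::'a. x * y = 0"
  shows "\<exists>k. sum_list (replicate (Suc k) a) = 0"
proof -
  define E where "E = range (\<lambda>n. sum_list (replicate (2 * n) a))"
  have "0 \<in> E" unfolding E_def by (auto intro: range_eqI[of _ _ 0])
  moreover have "x + y \<in> E" if "x \<in> E" "y \<in> E" for x y
  proof -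
    obtain n m where "x = sum_list (replicate (2 * n) a)" "y = sum_list (replicate (2 * m) a)"
      using \<open>x \<in> E\<close> \<open>y \<in> E\<close> unfolding E_def by blast
    then have "x + y = sum_list (replicate (2 * (n + m)) a)"
      by (simp only: sum_list_replicate_add add_mult_distrib2)
    then show ?thesis unfolding E_def by blast
  qed
  ultimately have "semiring_ideal E"
    unfolding semiring_ideal_def using zero_mult by auto
  then have "ring_ideal (differences E)" by (rule ring_ideal_differences)
  then consider "differences E = {0}" | "differences E = UNIV"
    using simple unfolding ring_ideal_simple_def by blast
  then show ?thesis
  proof cases
    case 1
    have "sum_list (replicate (2 * 1) a) - sum_list (replicate (2 * 0) a) \<in> differences E"
      unfolding differences_def E_def by blast
    then have "sum_list (replicate (Suc 1) a) = 0" using 1 by (simp add: numeral_2_eq_2)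
    then show ?thesis by blast
  next
    case 2
    then obtain n m where "a = sum_list (replicate (2 * n) a) - sum_list (replicate (2 * m) a)"
      unfolding differences_def E_def by blast
    then have "sum_list (replicate (Suc (2 * m)) a) = sum_list (replicate (2 * n) a)"
      by (simp add: algebra_simps)
    then show ?thesis
      by (rule sum_list_replicate_eq_imp_torsion) (rule Suc_double_not_eq_double)
  qed
qed

lemma ring_ideal_simple_imp_ideal_free:
  assumes simple: "ring_ideal_simple TYPE('a::ring)"
  shows "ideal_free TYPE('a)"
  unfolding ideal_free_def
proof (intro allI impI)
  fix A :: "'a set" assume A: "semiring_ideal A"
  define B where "B = {x \<in> A. - x \<in> A}"
  have "B = {0} \<or> B = UNIV"
    using simple ring_ideal_symmetric_part[OF A] unfolding ring_ideal_simple_def B_def by blast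
  moreover have "A = {0}" if B0: "B = {0}"
  proof (rule ccontr)
    assume "A \<noteq> {0}"
    then obtain a where a: "a \<in> A" "a \<noteq> 0" using semiring_ideal_zero[OF A] by blast
    have "r * x = 0 \<and> x * r = 0" if "x \<in> A" for x r
    proof -
      have "r * x \<in> A" "- r * x \<in> A" "x * r \<in> A" "x * - r \<in> A"
        using A that unfolding semiring_ideal_def by blast+
      then have "r * x \<in> B" "x * r \<in> B" unfolding B_def by simp_all
      then show ?thesis using B0 by blast
    qed
    then have "a \<in> {x. \<forall>r. r * x = 0 \<and> x * r = 0}" using a(1) by blast
    then have "{x::'a. \<forall>r. r * x = 0 \<and> x * r = 0} = UNIV"
      using simple ring_ideal_annihilator a(2) unfolding ring_ideal_simple_def by blast
    then obtain k where "sum_list (replicate (Suc k) a) = 0"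
      using zero_mult_simple_ring_torsion[OF simple] by blast
    then have "- a = sum_list (replicate k a)" by (simp add: neg_eq_iff_add_eq_0)
    then have "a \<in> B"
      unfolding B_def using a(1) sum_list_replicate_in_semiring_ideal[OF A a(1)] by simp
    then show False using a(2) B0 by blast
  qed
  moreover have "A = UNIV" if "B = UNIV"
    using that unfolding B_def by blast
  ultimately show "A = {0} \<or> A = UNIV" by blast
qed

lemma ideal_free_iff_ring_ideal_simple:
  "ideal_free TYPE('a::ring) \<longleftrightarrow> ring_ideal_simple TYPE('a)"
  using ring_ideal_simple_imp_ideal_free
  unfolding ideal_free_def ring_ideal_simple_def ring_ideal_iff_semiring_ideal_uminus_closed
  by blast

theorem corollary4p5:
  assumes "\<exists>x y :: 'a::ring. x \<noteq> y"
  shows "(ring_ideal_simple TYPE('a) \<longleftrightarrow> ideal_free TYPE('a))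
       \<and> (ring_ideal_simple TYPE('a) \<longleftrightarrow> k_simple TYPE('a))
       \<and> (ring_ideal_simple TYPE('a) \<longleftrightarrow> ring_congruence_simple TYPE('a))
       \<and> (ring_ideal_simple TYPE('a) \<longleftrightarrow> semiring_congruence_simple TYPE('a))
       \<and> (ring_ideal_simple TYPE('a) \<longleftrightarrow> k_congruence_simple TYPE('a))"
proof -
  have "k_simple TYPE('a) \<longleftrightarrow> ring_ideal_simple TYPE('a)"
    unfolding k_simple_def ring_ideal_simple_def k_ideal_iff_ring_ideal ..
  moreover have "semiring_congruence_simple TYPE('a) \<longleftrightarrow> ring_congruence_simple TYPE('a)"
    unfolding semiring_congruence_simple_def ring_congruence_simple_def
      semiring_congruence_iff_ring_congruence ..
  ultimately show ?thesis
    using ideal_free_iff_ring_ideal_simple[where 'a='a]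
      ring_congruence_simple_iff_ring_ideal_simple[where 'a='a]
      k_congruence_simple_iff_ring_ideal_simple[where 'a='a]
    by simp
qed

end
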